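(* Let $V=(J,(V_j)_{j\in J},d,H)$ be a hypergraph system, let $(\nu_e)_{e\in H}$ be a pseudorandom system of measures on $V$, and let $e\in H$. Let $0<\varepsilon<1$ and $0<\sigma<1/2$, let $I\subseteq\mathbb{R}$ be an interval, and let $G:V_e\to I$ be a function. Then, if $N$ is sufficiently large depending on $\varepsilon,\sigma$, there exists a $\sigma$-algebra $\mathcal{B}=\mathcal{B}_{\varepsilon,\sigma,e}(G)$ on $V_e$ with the following properties: (a) for every $\sigma$-algebra $\mathcal{B}'$ on $V_e$, $|G(x)-\mathbb{E}(G\mid\mathcal{B}\vee\mathcal{B}')(x)|\le\varepsilon$ for all $x\in V_e$; (b) $\mathcal{B}$ is generated by at most $O_{\varepsilon,I}(1)$ atoms; (c) for every atom $A$ of $\mathcal{B}$ there is a polynomial $P_A:\mathbb{R}\to\mathbb{R}$ of degree $O_{\varepsilon,\sigma,I}(1)$ with all coefficients $O_{\varepsilon,\sigma,I}(1)$, such that $P_A(y)=O(1)$ for all $y\in I$ and $$\mathbb{E}\big(|1_A(x)-P_A(G(x))|\,(\nu_e(x)+1)\mid x\in V_e\big)=O(\sigma).$$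
   Context: A hypergraph system is a quadruple $V=(J,(V_j)_{j\in J},d,H)$ where $J$ is a finite set, each $V_j$ is a finite nonempty set, $d\ge1$ is an integer and $H\subseteq\binom{J}{d}:=\{e\subseteq J:|e|=d\}$; for $e\subseteq J$ put $V_e:=\prod_{j\in e}V_j$. For a $\sigma$-algebra $\mathcal{B}$ on the finite set $V_e$ and $f:V_e\to\mathbb{R}$, $\mathbb{E}(f\mid\mathcal{B})(x)$ is the uniform average of $f$ over the atom of $\mathcal{B}$ containing $x$; $\mathcal{B}\vee\mathcal{B}'$ is the smallest $\sigma$-algebra containing both. For a finite nonempty set $Z$ and $f:Z\to\mathbb{R}$, $\mathbb{E}(f(x)\mid x\in Z):=|Z|^{-1}\sum_{x\in Z}f(x)$; constraints written after the bar mean uniform averaging over all tuples satisfying them. All objects depend on a parameter $N$ ranging over a sequence tending to infinity while $J,d,H$ are fixed; implicit constants may depend on $J$ (the constants in $O(\cdot)$ are absolute apart from this, and $O_y$ constants depend only on $y$ and $J$, not on $G$ or $N$). $o_{x\to0;y}(X)$ denotes a quantity bounded in magnitude by $c(x,y)X$ where $c(x,y)\to0$ as $x\to0$ for each fixed $y$; $O_y(X)$ a quantity bounded by $C(y)X$. Cube notation: for a finite set $e$, $\{0,1\}^e$ is the set of tuples $\omega=(\omega_j)_{j\in e}$ with $\omega_j\in\{0,1\}$, and $0^e$ is the all-zero tuple; for $x^{(0)}_J,x^{(1)}_J\in V_J$, $e\subseteq J$ and $\omega\in\{0,1\}^e$, set $x^{(\omega)}_e:=(x^{(\omega_j)}_j)_{j\in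 e}\in V_e$ and $x^{(a)}_e:=(x^{(a)}_j)_{j\in e}$ for $a\in\{0,1\}$. A system of measures is a family of functions $\nu_e:V_e\to[0,\infty)$, $e\in H$, with $\mathbb{E}(\nu_e(x_e)\mid x_e\in V_e)=1+o_{N\to\infty}(1)$. For $e\in H$ and $f:V_e\to\mathbb{R}$, $\mathcal{D}_ef(x^{(0)}_e):=\mathbb{E}\big(\prod_{\omega\in\{0,1\}^e,\ \omega\neq 0^e}f(x^{(\omega)}_e)\mid x^{(1)}_e\in V_e\big)$. The system is pseudorandom if: (i) $\mathcal{D}_e(\nu_e+1)(x_e)=O(1)$ for all $e\in H$, $x_e\in V_e$; (ii) for every choice of exponents $n_{e,\omega}\in\{0,1\}$, $\mathbb{E}\big(\prod_{e\in H}\prod_{\omega\in\{0,1\}^e}\nu_e(x^{(\omega)}_e)^{n_{e,\omega}}\mid x^{(0)}_J,x^{(1)}_J\in V_J\big)=1+o_{N\to\infty}(1)$; (iii) for every $e\in H$, $j\in e$, every choice of $n_{e,\omega}\in\{0,1\}$ and every integer $K\ge0$, $\mathbb{E}\Big(\mathbb{E}\big(\prod_{\omega\in\{0,1\}^e}\nu_e(x^{(\omega)}_e)^{n_{e,\omega}}\mid x^{(0)}_j,x^{(1)}_j\in V_j\big)^K\ \Big|\ x^{(0)}_{e\setminus\{j\}},x^{(1)}_{e\setminus\{j\}}\in V_{e\setminus\{j\}}\Big)=O_K(1)$. *)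

theory Defs
  imports "HOL-Analysis.Analysis" "HOL-Computational_Algebra.Polynomial"
begin

definition VV :: "('j \<Rightarrow> 'v set) \<Rightarrow> 'j set \<Rightarrow> ('j \<Rightarrow> 'v) set" where
  "VV Vj e = PiE e Vj"

definition avg :: "'a set \<Rightarrow> ('a \<Rightarrow> real) \<Rightarrow> real" where
  "avg Z f = (\<Sum>x\<in>Z. f x) / real (card Z)"

text \<open>Cube point x^(omega)_e; omega in {0,1}^e is encoded by the set S = {j in e. omega_j = 1}.\<close>
definition cube_pt :: "'j set \<Rightarrow> 'j set \<Rightarrow> ('j \<Rightarrow> 'v) \<Rightarrow> ('j \<Rightarrow> 'v) \<Rightarrow> ('j \<Rightarrow> 'v)" where
  "cube_pt e S x0 x1 = restrict (\<lambda>j. if j \<in> S then x1 j else x0 j) e"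

definition cube_D :: "('j \<Rightarrow> 'v set) \<Rightarrow> 'j set \<Rightarrow> (('j \<Rightarrow> 'v) \<Rightarrow> real) \<Rightarrow> ('j \<Rightarrow> 'v) \<Rightarrow> real" where
  "cube_D Vj e f x0 = avg (VV Vj e) (\<lambda>x1. \<Prod>S\<in>Pow e - {{}}. f (cube_pt e S x0 x1))"

definition hypergraph_system :: "'j set \<Rightarrow> ('j \<Rightarrow> 'v set) \<Rightarrow> nat \<Rightarrow> 'j set set \<Rightarrow> bool" where
  "hypergraph_system J Vj d H \<longleftrightarrow>
     finite J \<and> (\<forall>j\<in>J. finite (Vj j) \<and> Vj j \<noteq> {}) \<and> d \<ge> 1 \<and>
     H \<subseteq> {e. e \<subseteq> J \<and> card e = d}"

text \<open>A sequence (indexed by N, N \<rightarrow> \<infinity>) of hypergraph systems with fixed J, d, H, together with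
  a pseudorandom system of measures nu N e : V_e \<rightarrow> [0,\<infinity>).\<close>
definition pseudorandom_system ::
  "'j set \<Rightarrow> (nat \<Rightarrow> 'j \<Rightarrow> 'v set) \<Rightarrow> nat \<Rightarrow> 'j set set \<Rightarrow> (nat \<Rightarrow> 'j set \<Rightarrow> ('j \<Rightarrow> 'v) \<Rightarrow> real) \<Rightarrow> bool" where
  "pseudorandom_system J V d H \<nu> \<longleftrightarrow>
     (\<forall>N. hypergraph_system J (V N) d H) \<and>
     (\<forall>N. \<forall>e\<in>H. \<forall>x\<in>VV (V N) e. \<nu> N e x \<ge> 0) \<and>
     (\<forall>e\<in>H. (\<lambda>N. avg (VV (V N) e) (\<nu> N e)) \<longlonglongrightarrow> 1) \<and>
     (\<exists>C. \<forall>N. \<forall>e\<in>H. \<forall>x\<in>VV (V N) e. \<bar>cube_D (V N) e (\<lambda>y. \<nu> N e y + 1) x\<bar> \<le> C) \<and>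
     (\<forall>T \<subseteq> Sigma H Pow.
        (\<lambda>N. avg (VV (V N) J \<times> VV (V N) J)
           (\<lambda>(x0, x1). \<Prod>p\<in>T. \<nu> N (fst p) (cube_pt (fst p) (snd p) x0 x1))) \<longlonglongrightarrow> 1) \<and>
     (\<forall>e\<in>H. \<forall>j\<in>e. \<forall>T \<subseteq> Pow e. \<forall>K::nat. \<exists>C. \<forall>N.
        avg (VV (V N) (e - {j}) \<times> VV (V N) (e - {j}))
          (\<lambda>(y0, y1). (avg (V N j \<times> V N j)
             (\<lambda>(a, b). \<Prod>S\<in>T. \<nu> N e (cube_pt e S (y0(j := a)) (y1(j := b))))) ^ K) \<le> C)"

definition atom :: "'a set set \<Rightarrow> 'a \<Rightarrow> 'a set" where
  "atom M x = \<Inter>{A\<in>M. x \<in> A}"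

definition atoms :: "'a set \<Rightarrow> 'a set set \<Rightarrow> 'a set set" where
  "atoms \<Omega> M = atom M ` \<Omega>"

definition cond_exp :: "'a set set \<Rightarrow> ('a \<Rightarrow> real) \<Rightarrow> 'a \<Rightarrow> real" where
  "cond_exp M f x = avg (atom M x) f"

definition join_sa :: "'a set \<Rightarrow> 'a set set \<Rightarrow> 'a set set \<Rightarrow> 'a set set" where
  "join_sa \<Omega> M M' = sigma_sets \<Omega> (M \<union> M')"

end

theory Submission
  imports Defs
begin

(*
  Let B be generated by the index of the cell of width \<epsilon>/2 containing G x; then G varies by
  less than \<epsilon>/2 on every atom of B, which gives (a) and (b).  Away from the points within
  w = \<epsilon>/(2K) of a cell boundary, the indicator of a cell is a continuous trapezoid function of G,
  and by Weierstrass such a trapezoid is uniformly \<sigma>-close on [Inf I, Sup I] to a polynomial.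
  Shifting the cells by multiples of w gives K \<approx> 1/\<sigma> partitions whose sets of near-boundary
  points are disjoint, so for one of them these points carry at most a 1/K \<le> \<sigma> fraction of the
  weight \<nu> + 1; as the average of \<nu> is below 2 for large N, the weighted error in (c) is at
  most 12\<sigma>.
*)

lemma real_polynomial_function_imp_poly:
  assumes "real_polynomial_function f"
  obtains P where "f = poly P"
proof -
  obtain a n where "f = (\<lambda>x. \<Sum>i\<le>n. a i * x ^ i)"
    using real_polynomial_function_imp_sum[OF assms] by blast
  then have "f = poly (\<Sum>i\<le>n. monom (a i) i)"
    by (simp add: fun_eq_iff poly_sum poly_monom)
  then show thesis by (rule that)
qed

lemma Stone_Weierstrass_poly:
  fixes g :: "real \<Rightarrow> real"
  assumes "continuous_on {a..b} g" "0 < \<sigma>"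
  shows "\<exists>P. \<forall>y\<in>{a..b}. \<bar>g y - poly P y\<bar> < \<sigma>"
proof -
  obtain h where "real_polynomial_function h" "\<And>y. y \<in> {a..b} \<Longrightarrow> \<bar>g y - h y\<bar> < \<sigma>"
    using Stone_Weierstrass_real_polynomial_function[OF compact_Icc assms] by blast
  then show ?thesis by (metis real_polynomial_function_imp_poly)
qed

lemma finite_poly_family_bounded:
  fixes Q :: "'i \<Rightarrow> real poly"
  assumes "finite S"
  shows "\<exists>D C. \<forall>p\<in>S. degree (Q p) \<le> D \<and> (\<forall>i. \<bar>coeff (Q p) i\<bar> \<le> C)"
proof -
  define coeff_sum where "coeff_sum P = (\<Sum>i\<le>degree P. \<bar>coeff P i\<bar>)" for P :: "real poly"
  have deg: "degree (Q p) \<le> (\<Sum>q\<in>S. degree (Q q))" if "p \<in> S" for p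
    using assms that by (intro member_le_sum) auto
  have coeff: "\<bar>coeff (Q p) i\<bar> \<le> (\<Sum>q\<in>S. coeff_sum (Q q))" if "p \<in> S" for p i
  proof -
    have "\<bar>coeff (Q p) i\<bar> \<le> coeff_sum (Q p)"
      by (cases "i \<le> degree (Q p)")
        (auto simp: coeff_sum_def coeff_eq_0 intro: member_le_sum sum_nonneg)
    also have "\<dots> \<le> (\<Sum>q\<in>S. coeff_sum (Q q))"
      using assms that by (intro member_le_sum) (auto simp: coeff_sum_def intro: sum_nonneg)
    finally show ?thesis .
  qed
  show ?thesis using deg coeff by blast
qed

definition trapezoid :: "real \<Rightarrow> real \<Rightarrow> real \<Rightarrow> real \<Rightarrow> real" where
  "trapezoid s t w y = max 0 (min 1 (min (2 * (y - s) / w + 1) (2 * (t - y) / w + 1)))"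

lemma trapezoid_range: "trapezoid s t w y \<in> {0..1}"
  unfolding trapezoid_def by auto

lemma continuous_on_trapezoid: "continuous_on A (trapezoid s t w)"
  unfolding trapezoid_def divide_inverse by (intro continuous_intros)

lemma trapezoid_eq_indicator:
  assumes "0 < w" "y \<notin> {s - w/2..<s + w/2}" "y \<notin> {t - w/2..<t + w/2}"
  shows "trapezoid s t w y = indicator {s..<t} y"
proof -
  consider "y < s - w/2" | "s + w/2 \<le> y" "y < t - w/2" | "s + w/2 \<le> y" "t + w/2 \<le> y"
    using assms(2,3) by force
  then show ?thesis
  proof cases
    case 1
    then have "2 * (y - s) / w + 1 < 0" using assms(1) by (simp add: field_simps)
    then show ?thesis using 1 assms(1) by (simp add: trapezoid_def)
  next
    case 2
    then have "1 \<le> 2 * (y - s) / w + 1" "1 \<le> 2 * (t - y) / w + 1" using assms(1) by (simp_all add: field_simps)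
    then show ?thesis using 2 assms(1) by (simp add: trapezoid_def)
  next
    case 3
    then have "2 * (t - y) / w + 1 \<le> 0" using assms(1) by (simp add: field_simps)
    then show ?thesis using 3 assms(1) by (simp add: trapezoid_def)
  qed
qed

lemma floor_divide_eq_iff:
  fixes y c h :: real assumes "0 < h"
  shows "\<lfloor>(y - c) / h\<rfloor> = n \<longleftrightarrow> y \<in> {c + of_int n * h ..< c + (of_int n + 1) * h}"
  using assms by (simp add: floor_eq_iff field_simps)

lemma indicator_cell_eq_trapezoid:
  fixes a w y :: real and K :: nat and m :: int
  assumes w: "0 < w" and far: "\<lfloor>(y - (a - w/2)) / w\<rfloor> mod K \<noteq> m mod K"
  shows "indicator {a + w*m ..< a + w*(m + int K)} y = trapezoid (a + w*m) (a + w*(m + int K)) w y"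
proof -
  have not_near: "y \<notin> {a + w*j - w/2 ..< a + w*j + w/2}" if "\<lfloor>(y - (a - w/2)) / w\<rfloor> \<noteq> j" for j
    using that floor_divide_eq_iff[OF w, of y "a - w/2" j] by (simp add: algebra_simps)
  have "\<lfloor>(y - (a - w/2)) / w\<rfloor> \<noteq> m" "\<lfloor>(y - (a - w/2)) / w\<rfloor> \<noteq> m + K"
    using far by auto
  then show ?thesis
    using not_near[of m] not_near[of "m + K"] w by (intro trapezoid_eq_indicator[symmetric]) auto
qed

lemma abs_diff_avg_le:
  fixes g :: "'a \<Rightarrow> real"
  assumes "finite Z" "Z \<noteq> {}" "\<And>y. y \<in> Z \<Longrightarrow> \<bar>g y - c\<bar> \<le> \<epsilon>"
  shows "\<bar>c - avg Z g\<bar> \<le> \<epsilon>"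
proof -
  have card: "real (card Z) > 0" using assms by auto
  have "\<bar>c - avg Z g\<bar> = \<bar>\<Sum>y\<in>Z. g y - c\<bar> / real (card Z)"
    using card by (simp add: avg_def sum_subtractf abs_minus_commute field_simps)
  also have "\<dots> \<le> (\<Sum>y\<in>Z. \<bar>g y - c\<bar>) / real (card Z)"
    using card by (intro divide_right_mono sum_abs) simp
  also have "\<dots> \<le> (\<Sum>y\<in>Z. \<epsilon>) / real (card Z)"
    using card assms(3) by (intro divide_right_mono sum_mono) auto
  finally show ?thesis using card by simp
qed

lemma abs_diff_cond_exp_le:
  assumes "finite F" "F \<in> M" "x \<in> F" "\<And>y. y \<in> F \<Longrightarrow> \<bar>G y - G x\<bar> \<le> \<epsilon>"
  shows "\<bar>G x - cond_exp M G x\<bar> \<le> \<epsilon>"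
proof -
  have "atom M x \<subseteq> F" "x \<in> atom M x" using assms(2,3) unfolding atom_def by auto
  then show ?thesis
    unfolding cond_exp_def using assms by (intro abs_diff_avg_le) (auto intro: finite_subset)
qed

definition level_algebra :: "'a set \<Rightarrow> ('a \<Rightarrow> 'b) \<Rightarrow> 'a set set" where
  "level_algebra \<Omega> f = {f -` T \<inter> \<Omega> | T. True}"

lemma sigma_algebra_level_algebra: "sigma_algebra \<Omega> (level_algebra \<Omega> f)"
proof -
  have "level_algebra \<Omega> f = sets (vimage_algebra \<Omega> f (count_space UNIV))"
    unfolding level_algebra_def by (subst sets_vimage_algebra2) auto
  then show ?thesis
    using sets.sigma_algebra_axioms[of "vimage_algebra \<Omega> f (count_space UNIV)"] by simp
qed

lemma atom_level_algebra:
  assumes "x \<in> \<Omega>"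
  shows "atom (level_algebra \<Omega> f) x = f -` {f x} \<inter> \<Omega>"
proof -
  have "f -` {f x} \<inter> \<Omega> \<in> level_algebra \<Omega> f" unfolding level_algebra_def by blast
  then show ?thesis using assms unfolding atom_def level_algebra_def by auto
qed

lemma atoms_level_algebra: "atoms \<Omega> (level_algebra \<Omega> f) = (\<lambda>v. f -` {v} \<inter> \<Omega>) ` f ` \<Omega>"
  unfolding atoms_def image_image by (intro image_cong) (auto simp: atom_level_algebra)

lemma card_atoms_level_algebra:
  assumes "finite \<Omega>"
  shows "card (atoms \<Omega> (level_algebra \<Omega> f)) \<le> card (f ` \<Omega>)"
  unfolding atoms_level_algebra using assms by (intro card_image_le) simp

lemma cond_exp_join_level_algebra:
  assumes "finite \<Omega>" "x \<in> \<Omega>" "\<And>y. y \<in> \<Omega> \<Longrightarrow> f y = f x \<Longrightarrow> \<bar>G y - G x\<bar> \<le> \<epsilon>"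
  shows "\<bar>G x - cond_exp (join_sa \<Omega> (level_algebra \<Omega> f) B') G x\<bar> \<le> \<epsilon>"
proof (rule abs_diff_cond_exp_le)
  show "f -` {f x} \<inter> \<Omega> \<in> join_sa \<Omega> (level_algebra \<Omega> f) B'"
    unfolding join_sa_def level_algebra_def by (blast intro: sigma_sets.Basic)
qed (use assms in auto)

lemma exists_fiber_sum_le_average:
  fixes c :: "'a \<Rightarrow> nat" and wt :: "'a \<Rightarrow> real"
  assumes "finite \<Omega>" "0 < K" "\<And>x. x \<in> \<Omega> \<Longrightarrow> c x < K"
  obtains r where "r < K" "(\<Sum>x\<in>{x\<in>\<Omega>. c x = r}. wt x) \<le> (\<Sum>x\<in>\<Omega>. wt x) / K"
proof (rule ccontr)
  assume "\<not> thesis"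
  then have "\<forall>r<K. (\<Sum>x\<in>\<Omega>. wt x) / K < (\<Sum>x\<in>{x\<in>\<Omega>. c x = r}. wt x)"
    using that by force
  then have "(\<Sum>r<K. (\<Sum>x\<in>\<Omega>. wt x) / K) < (\<Sum>r<K. \<Sum>x\<in>{x\<in>\<Omega>. c x = r}. wt x)"
    using assms(2) by (intro sum_strict_mono) auto
  also have "\<dots> = (\<Sum>x\<in>\<Omega>. wt x)"
    using assms by (intro sum.group) auto
  finally show False using assms(2) by simp
qed

lemma sum_weighted_error_le:
  fixes err wt :: "'a \<Rightarrow> real"
  assumes "finite \<Omega>" "Bad \<subseteq> \<Omega>" "\<And>x. x \<in> \<Omega> \<Longrightarrow> 0 \<le> wt x" "0 \<le> \<sigma>" "0 \<le> M"
    and "\<And>x. x \<in> Bad \<Longrightarrow> \<bar>err x\<bar> \<le> M" "\<And>x. x \<in> \<Omega> - Bad \<Longrightarrow> \<bar>err x\<bar> \<le> \<sigma>"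
    and "(\<Sum>x\<in>Bad. wt x) \<le> \<sigma> * (\<Sum>x\<in>\<Omega>. wt x)"
  shows "(\<Sum>x\<in>\<Omega>. \<bar>err x\<bar> * wt x) \<le> (1 + M) * \<sigma> * (\<Sum>x\<in>\<Omega>. wt x)"
proof -
  have "(\<Sum>x\<in>\<Omega>. \<bar>err x\<bar> * wt x) = (\<Sum>x\<in>\<Omega> - Bad. \<bar>err x\<bar> * wt x) + (\<Sum>x\<in>Bad. \<bar>err x\<bar> * wt x)"
    using assms(1,2) by (simp add: sum.subset_diff)
  also have "\<dots> \<le> (\<Sum>x\<in>\<Omega> - Bad. \<sigma> * wt x) + (\<Sum>x\<in>Bad. M * wt x)"
    using assms by (intro add_mono sum_mono mult_right_mono) auto
  also have "(\<Sum>x\<in>\<Omega> - Bad. \<sigma> * wt x) \<le> \<sigma> * (\<Sum>x\<in>\<Omega>. wt x)"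
    unfolding sum_distrib_left[symmetric] using assms by (intro mult_left_mono sum_mono2) auto
  also have "(\<Sum>x\<in>Bad. M * wt x) \<le> M * (\<sigma> * (\<Sum>x\<in>\<Omega>. wt x))"
    unfolding sum_distrib_left[symmetric] using assms by (intro mult_left_mono) auto
  finally show ?thesis by (simp add: algebra_simps)
qed

lemma avg_weighted_error_le:
  fixes err \<nu> :: "'a \<Rightarrow> real"
  assumes "finite \<Omega>" "\<Omega> \<noteq> {}" "\<forall>x\<in>\<Omega>. 0 \<le> \<nu> x" "avg \<Omega> \<nu> < 2" "Bad \<subseteq> \<Omega>" "0 \<le> \<sigma>"
    and "\<And>x. x \<in> Bad \<Longrightarrow> \<bar>err x\<bar> \<le> 3" "\<And>x. x \<in> \<Omega> - Bad \<Longrightarrow> \<bar>err x\<bar> \<le> \<sigma>"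
    and "(\<Sum>x\<in>Bad. \<nu> x + 1) \<le> \<sigma> * (\<Sum>x\<in>\<Omega>. \<nu> x + 1)"
  shows "avg \<Omega> (\<lambda>x. \<bar>err x\<bar> * (\<nu> x + 1)) \<le> 12 * \<sigma>"
proof -
  have card: "0 < real (card \<Omega>)" using assms(1,2) by auto
  have "(\<Sum>x\<in>\<Omega>. \<nu> x + 1) = sum \<nu> \<Omega> + card \<Omega>" by (simp add: sum.distrib)
  also have "\<dots> < 3 * real (card \<Omega>)" using assms(4) card by (simp add: avg_def divide_less_eq)
  finally have total: "(\<Sum>x\<in>\<Omega>. \<nu> x + 1) \<le> 3 * real (card \<Omega>)" by simp
  have "(\<Sum>x\<in>\<Omega>. \<bar>err x\<bar> * (\<nu> x + 1)) \<le> (1 + 3) * \<sigma> * (\<Sum>x\<in>\<Omega>. \<nu> x + 1)"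
    using assms by (intro sum_weighted_error_le) auto
  also have "\<dots> \<le> (1 + 3) * \<sigma> * (3 * real (card \<Omega>))"
    using total assms(6) by (intro mult_left_mono) auto
  finally show ?thesis using card by (simp add: avg_def divide_le_eq)
qed

lemma avg_indicator_poly_error_le:
  fixes \<nu> G h :: "_ \<Rightarrow> real" and P :: "real poly"
  assumes \<Omega>: "finite \<Omega>" "\<Omega> \<noteq> {}" "\<forall>x\<in>\<Omega>. 0 \<le> \<nu> x" "avg \<Omega> \<nu> < 2" and Bad: "Bad \<subseteq> \<Omega>"
    and G: "\<forall>x\<in>\<Omega>. G x \<in> {a..b}" and \<sigma>: "0 < \<sigma>" "\<sigma> \<le> 1" and h: "\<And>y. h y \<in> {0..1}"
    and P: "\<forall>y\<in>{a..b}. \<bar>h y - poly P y\<bar> < \<sigma>"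
    and A: "\<And>x. x \<in> \<Omega> - Bad \<Longrightarrow> indicator A x = h (G x)"
    and small: "(\<Sum>x\<in>Bad. \<nu> x + 1) \<le> \<sigma> * (\<Sum>x\<in>\<Omega>. \<nu> x + 1)"
  shows "(\<forall>y\<in>{a..b}. \<bar>poly P y\<bar> \<le> 2) \<and>
    avg \<Omega> (\<lambda>x. \<bar>indicator A x - poly P (G x)\<bar> * (\<nu> x + 1)) \<le> 12 * \<sigma>"
proof
  show P_bound: "\<forall>y\<in>{a..b}. \<bar>poly P y\<bar> \<le> 2"
  proof
    fix y assume "y \<in> {a..b}"
    then have "\<bar>h y - poly P y\<bar> < \<sigma>" using P by blast
    then show "\<bar>poly P y\<bar> \<le> 2" using h[of y] \<sigma>(2) by auto
  qed
  show "avg \<Omega> (\<lambda>x. \<bar>indicator A x - poly P (G x)\<bar> * (\<nu> x + 1)) \<le> 12 * \<sigma>"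
  proof (rule avg_weighted_error_le[OF \<Omega> Bad])
    show "\<bar>indicator A x - poly P (G x)\<bar> \<le> 3" if "x \<in> Bad" for x
      using that Bad G P_bound by (fastforce simp: indicator_def)
    show "\<bar>indicator A x - poly P (G x)\<bar> \<le> \<sigma>" if "x \<in> \<Omega> - Bad" for x
      using that A G P by fastforce
  qed (use \<sigma> small in auto)
qed

lemma cell_partition_algebra:
  fixes G :: "'a \<Rightarrow> real"
  assumes \<Omega>: "finite \<Omega>" and h: "0 < h" and c: "a \<le> c" "c \<le> a + h" and G: "\<forall>x\<in>\<Omega>. G x \<in> {a..b}"
  defines "f \<equiv> \<lambda>x. \<lfloor>(G x - c) / h\<rfloor>"
  shows "sigma_algebra \<Omega> (level_algebra \<Omega> f)"
    and "\<forall>B'. \<forall>x\<in>\<Omega>. \<bar>G x - cond_exp (join_sa \<Omega> (level_algebra \<Omega> f) B') G x\<bar> \<le> h"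
    and "card (atoms \<Omega> (level_algebra \<Omega> f)) \<le> nat (\<lfloor>(b - a) / h\<rfloor> + 2)"
proof -
  have cell: "f x = n \<longleftrightarrow> G x \<in> {c + n * h ..< c + (n + 1) * h}" for x n
    unfolding f_def by (rule floor_divide_eq_iff[OF h])
  show "sigma_algebra \<Omega> (level_algebra \<Omega> f)" by (rule sigma_algebra_level_algebra)
  show "\<forall>B'. \<forall>x\<in>\<Omega>. \<bar>G x - cond_exp (join_sa \<Omega> (level_algebra \<Omega> f) B') G x\<bar> \<le> h"
  proof (intro allI ballI)
    fix B' x assume "x \<in> \<Omega>"
    with \<Omega> show "\<bar>G x - cond_exp (join_sa \<Omega> (level_algebra \<Omega> f) B') G x\<bar> \<le> h"
    proof (rule cond_exp_join_level_algebra)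
      show "\<bar>G y - G x\<bar> \<le> h" if "f y = f x" for y
        using cell[of y "f x"] cell[of x "f x"] that by (auto simp: algebra_simps)
    qed
  qed
  have "f x \<in> {-1..\<lfloor>(b - a) / h\<rfloor>}" if "x \<in> \<Omega>" for x
  proof -
    have "-1 \<le> (G x - c) / h" "(G x - c) / h \<le> (b - a) / h"
      using G that c h by (auto simp: le_divide_eq intro!: divide_right_mono)
    then show ?thesis unfolding f_def by (auto simp: le_floor_iff intro: order.trans[OF of_int_floor_le])
  qed
  then have "card (f ` \<Omega>) \<le> card {-1..\<lfloor>(b - a) / h\<rfloor>}" by (intro card_mono) auto
  then show "card (atoms \<Omega> (level_algebra \<Omega> f)) \<le> nat (\<lfloor>(b - a) / h\<rfloor> + 2)"
    using card_atoms_level_algebra[OF \<Omega>, of f] by simp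
qed

lemma shifted_cell_atoms_poly_approx:
  fixes \<Omega> :: "'a set" and \<nu> G :: "'a \<Rightarrow> real" and Q :: "int \<Rightarrow> real poly" and K r :: nat
    and a b w \<sigma> :: real
  defines "Bad \<equiv> {x\<in>\<Omega>. nat (\<lfloor>(G x - (a - w/2)) / w\<rfloor> mod K) = r}"
    and "f \<equiv> \<lambda>x. \<lfloor>(G x - (a + w * r)) / (w * K)\<rfloor>"
  assumes \<Omega>: "finite \<Omega>" "\<Omega> \<noteq> {}" "\<forall>x\<in>\<Omega>. 0 \<le> \<nu> x" "avg \<Omega> \<nu> < 2"
    and G: "\<forall>x\<in>\<Omega>. G x \<in> {a..b}" and w: "0 < w"
    and K: "0 < K" "1 / K \<le> \<sigma>" and \<sigma>: "\<sigma> \<le> 1" and r: "r < K"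
    and Q: "\<forall>m. \<forall>y\<in>{a..b}. \<bar>trapezoid (a + w*m) (a + w*(m + int K)) w y - poly (Q m) y\<bar> < \<sigma>"
    and small: "(\<Sum>x\<in>Bad. \<nu> x + 1) \<le> (\<Sum>x\<in>\<Omega>. \<nu> x + 1) / K"
  shows "\<forall>A\<in>atoms \<Omega> (level_algebra \<Omega> f). \<exists>m \<in> {-int K..\<lfloor>(b - a) / w\<rfloor>}.
    (\<forall>y\<in>{a..b}. \<bar>poly (Q m) y\<bar> \<le> 2) \<and>
    avg \<Omega> (\<lambda>x. \<bar>indicator A x - poly (Q m) (G x)\<bar> * (\<nu> x + 1)) \<le> 12 * \<sigma>"
proof
  fix A assume "A \<in> atoms \<Omega> (level_algebra \<Omega> f)"
  then obtain x0 where x0: "x0 \<in> \<Omega>" and A: "A = f -` {f x0} \<inter> \<Omega>"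
    unfolding atoms_level_algebra by auto
  have wK: "0 < w * K" using w K by simp
  have cell: "f x = n \<longleftrightarrow> G x \<in> {a + w * (r + n * K) ..< a + w * (r + n * K + K)}" for x and n :: int
    unfolding f_def floor_divide_eq_iff[OF wK] by (simp add: algebra_simps)
  define m where "m = r + f x0 * K"
  have "a \<le> G x0" "G x0 < a + w * (m + K)" "a + w * m \<le> G x0" "G x0 \<le> b"
    using cell[of x0 "f x0"] G x0 by (auto simp: m_def algebra_simps)
  then have "0 < w * (m + K)" "m \<le> (b - a) / w" using w by (auto simp: field_simps)
  then have "- int K < m" "m \<le> \<lfloor>(b - a) / w\<rfloor>"
    using w by (auto simp: zero_less_mult_iff le_floor_iff)
  moreover have "(\<forall>y\<in>{a..b}. \<bar>poly (Q m) y\<bar> \<le> 2) \<and>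
      avg \<Omega> (\<lambda>x. \<bar>indicator A x - poly (Q m) (G x)\<bar> * (\<nu> x + 1)) \<le> 12 * \<sigma>"
  proof (rule avg_indicator_poly_error_le[OF \<Omega> _ G _ \<sigma> trapezoid_range])
    show "indicator A x = trapezoid (a + w*m) (a + w*(m + int K)) w (G x)" if "x \<in> \<Omega> - Bad" for x
    proof -
      \<comment> \<open>Off \<open>Bad\<close>, \<open>G x\<close> is at distance at least \<open>w / 2\<close> from every cell boundary \<open>a + w * j\<close>
        with \<open>j \<equiv> r (mod K)\<close>, where the trapezoid agrees with the indicator of the cell.\<close>
      have "m mod K = int r" unfolding m_def using r by simp
      then have "\<lfloor>(G x - (a - w/2)) / w\<rfloor> mod K \<noteq> m mod K"
        using that K(1) unfolding Bad_def by auto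
      then show ?thesis
        using that cell[of x "f x0"] indicator_cell_eq_trapezoid[OF w, of "G x" a K m]
        unfolding A m_def by (auto simp: indicator_def algebra_simps)
    qed
    have "0 < 1 / real K" using K(1) by simp
    then show "0 < \<sigma>" using K(2) by linarith
    have "(\<Sum>x\<in>\<Omega>. \<nu> x + 1) / K \<le> \<sigma> * (\<Sum>x\<in>\<Omega>. \<nu> x + 1)"
      using K(2) \<Omega>(3) by (simp add: mult_right_mono sum_nonneg divide_inverse mult.commute)
    then show "(\<Sum>x\<in>Bad. \<nu> x + 1) \<le> \<sigma> * (\<Sum>x\<in>\<Omega>. \<nu> x + 1)" using small by linarith
  qed (use Q in \<open>auto simp: Bad_def\<close>)
  ultimately show "\<exists>m \<in> {-int K..\<lfloor>(b - a) / w\<rfloor>}. (\<forall>y\<in>{a..b}. \<bar>poly (Q m) y\<bar> \<le> 2) \<and>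
      avg \<Omega> (\<lambda>x. \<bar>indicator A x - poly (Q m) (G x)\<bar> * (\<nu> x + 1)) \<le> 12 * \<sigma>"
    by auto
qed

lemma shifted_cell_discretization:
  fixes \<Omega> :: "'a set" and \<nu> G :: "'a \<Rightarrow> real" and Q :: "int \<Rightarrow> real poly" and K :: nat
    and a b w \<epsilon> \<sigma> :: real
  assumes \<Omega>: "finite \<Omega>" "\<Omega> \<noteq> {}" "\<forall>x\<in>\<Omega>. 0 \<le> \<nu> x" "avg \<Omega> \<nu> < 2"
    and G: "\<forall>x\<in>\<Omega>. G x \<in> I" and I: "I \<subseteq> {a..b}" and w: "0 < w" "2 * w * K = \<epsilon>"
    and K: "0 < K" "1 / K \<le> \<sigma>" and \<sigma>: "\<sigma> \<le> 1"
    and Q: "\<forall>m. \<forall>y\<in>{a..b}. \<bar>trapezoid (a + w*m) (a + w*(m + int K)) w y - poly (Q m) y\<bar> < \<sigma>"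
    and Q_bounds: "\<forall>m \<in> {-int K..\<lfloor>(b - a) / w\<rfloor>}. degree (Q m) \<le> D \<and> (\<forall>i. \<bar>coeff (Q m) i\<bar> \<le> C)"
  shows "\<exists>B. sigma_algebra \<Omega> B \<and>
    (\<forall>B'. \<forall>x\<in>\<Omega>. \<bar>G x - cond_exp (join_sa \<Omega> B B') G x\<bar> \<le> \<epsilon>) \<and>
    card (atoms \<Omega> B) \<le> nat (\<lfloor>2 * (b - a) / \<epsilon>\<rfloor> + 2) \<and>
    (\<forall>A\<in>atoms \<Omega> B. \<exists>P. degree P \<le> D \<and> (\<forall>i. \<bar>coeff P i\<bar> \<le> C) \<and>
       (\<forall>y\<in>I. \<bar>poly P y\<bar> \<le> 2) \<and>
       avg \<Omega> (\<lambda>x. \<bar>indicator A x - poly P (G x)\<bar> * (\<nu> x + 1)) \<le> 12 * \<sigma>)"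
proof -
  have G_ab: "\<forall>x\<in>\<Omega>. G x \<in> {a..b}" using G I by blast
  obtain r where r: "r < K" and small:
    "(\<Sum>x\<in>{x\<in>\<Omega>. nat (\<lfloor>(G x - (a - w/2)) / w\<rfloor> mod K) = r}. \<nu> x + 1) \<le> (\<Sum>x\<in>\<Omega>. \<nu> x + 1) / K"
    using exists_fiber_sum_le_average[OF \<Omega>(1) K(1), of "\<lambda>x. nat (\<lfloor>(G x - (a - w/2)) / w\<rfloor> mod K)"] K(1)
    by (auto simp: nat_less_iff)
  define f where "f x = \<lfloor>(G x - (a + w * r)) / (w * K)\<rfloor>" for x
  have h: "0 < w * K" "w * K = \<epsilon> / 2" "a \<le> a + w * r" "a + w * r \<le> a + w * K"
    using w K r by auto
  note cells = cell_partition_algebra[OF \<Omega>(1) h(1,3,4) G_ab, folded f_def]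
  have "\<forall>B'. \<forall>x\<in>\<Omega>. \<bar>G x - cond_exp (join_sa \<Omega> (level_algebra \<Omega> f) B') G x\<bar> \<le> \<epsilon>"
  proof (intro allI ballI)
    fix B' x assume "x \<in> \<Omega>"
    then have "\<bar>G x - cond_exp (join_sa \<Omega> (level_algebra \<Omega> f) B') G x\<bar> \<le> w * K"
      using cells(2) by blast
    then show "\<bar>G x - cond_exp (join_sa \<Omega> (level_algebra \<Omega> f) B') G x\<bar> \<le> \<epsilon>" using h(1,2) by linarith
  qed
  moreover have "(b - a) / (w * K) = 2 * (b - a) / \<epsilon>" unfolding h(2) by simp
  then have "card (atoms \<Omega> (level_algebra \<Omega> f)) \<le> nat (\<lfloor>2 * (b - a) / \<epsilon>\<rfloor> + 2)"
    using cells(3) by simp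
  moreover have "\<exists>P. degree P \<le> D \<and> (\<forall>i. \<bar>coeff P i\<bar> \<le> C) \<and> (\<forall>y\<in>I. \<bar>poly P y\<bar> \<le> 2) \<and>
       avg \<Omega> (\<lambda>x. \<bar>indicator A x - poly P (G x)\<bar> * (\<nu> x + 1)) \<le> 12 * \<sigma>"
    if A_atom: "A \<in> atoms \<Omega> (level_algebra \<Omega> f)" for A
  proof -
    obtain m where "m \<in> {-int K..\<lfloor>(b - a) / w\<rfloor>}" "\<forall>y\<in>{a..b}. \<bar>poly (Q m) y\<bar> \<le> 2"
      "avg \<Omega> (\<lambda>x. \<bar>indicator A x - poly (Q m) (G x)\<bar> * (\<nu> x + 1)) \<le> 12 * \<sigma>"
      using shifted_cell_atoms_poly_approx[OF \<Omega> G_ab w(1) K \<sigma> r Q small, folded f_def] A_atom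
      by blast
    then show ?thesis using Q_bounds I by (intro exI[of _ "Q m"]) blast
  qed
  ultimately show ?thesis using cells(1) by blast
qed

lemma bounded_subset_Icc_Inf_Sup:
  fixes I :: "real set"
  assumes "bounded I"
  shows "I \<subseteq> {Inf I..Sup I}"
  using cInf_lower[OF _ bounded_imp_bdd_below[OF assms]] cSup_upper[OF _ bounded_imp_bdd_above[OF assms]]
  by auto

lemma nat_ceiling_inverse_bounds:
  fixes \<sigma> :: real
  assumes "0 < \<sigma>"
  shows "0 < nat \<lceil>1 / \<sigma>\<rceil>" "1 / nat \<lceil>1 / \<sigma>\<rceil> \<le> \<sigma>"
proof -
  show "0 < nat \<lceil>1 / \<sigma>\<rceil>" using assms by simp
  have "1 / \<sigma> \<le> nat \<lceil>1 / \<sigma>\<rceil>" by linarith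
  from le_imp_inverse_le[OF this] show "1 / nat \<lceil>1 / \<sigma>\<rceil> \<le> \<sigma>"
    using assms by (simp add: inverse_eq_divide)
qed

lemma polynomial_discretization:
  obtains Cdeg :: "real \<Rightarrow> real \<Rightarrow> real set \<Rightarrow> nat" and Ccoef :: "real \<Rightarrow> real \<Rightarrow> real set \<Rightarrow> real"
  where "\<And>\<epsilon> \<sigma> I (\<Omega> :: 'a set) \<nu> G. 0 < \<epsilon> \<Longrightarrow> 0 < \<sigma> \<Longrightarrow> \<sigma> \<le> 1 \<Longrightarrow> bounded I \<Longrightarrow>
      finite \<Omega> \<Longrightarrow> \<Omega> \<noteq> {} \<Longrightarrow> \<forall>x\<in>\<Omega>. 0 \<le> \<nu> x \<Longrightarrow> avg \<Omega> \<nu> < 2 \<Longrightarrow> \<forall>x\<in>\<Omega>. G x \<in> I \<Longrightarrow>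
      \<exists>B. sigma_algebra \<Omega> B \<and>
        (\<forall>B'. \<forall>x\<in>\<Omega>. \<bar>G x - cond_exp (join_sa \<Omega> B B') G x\<bar> \<le> \<epsilon>) \<and>
        card (atoms \<Omega> B) \<le> nat (\<lfloor>2 * (Sup I - Inf I) / \<epsilon>\<rfloor> + 2) \<and>
        (\<forall>A\<in>atoms \<Omega> B. \<exists>P.
           degree P \<le> Cdeg \<epsilon> \<sigma> I \<and> (\<forall>i. \<bar>coeff P i\<bar> \<le> Ccoef \<epsilon> \<sigma> I) \<and>
           (\<forall>y\<in>I. \<bar>poly P y\<bar> \<le> 2) \<and>
           avg \<Omega> (\<lambda>x. \<bar>indicator A x - poly P (G x)\<bar> * (\<nu> x + 1)) \<le> 12 * \<sigma>)"
proof -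
  define K :: "real \<Rightarrow> nat" where "K \<sigma> = nat \<lceil>1 / \<sigma>\<rceil>" for \<sigma>
  define w where "w \<epsilon> \<sigma> = \<epsilon> / (2 * K \<sigma>)" for \<epsilon> \<sigma>
  define trap where "trap \<epsilon> \<sigma> I m = trapezoid (Inf I + w \<epsilon> \<sigma> * m) (Inf I + w \<epsilon> \<sigma> * (m + int (K \<sigma>))) (w \<epsilon> \<sigma>)"
    for \<epsilon> \<sigma> I and m :: int
  \<comment> \<open>The polynomials are chosen once for every \<open>(\<epsilon>, \<sigma>, I)\<close>; finitely many of them occur,
    which bounds their degrees and coefficients independently of \<open>\<Omega>\<close>, \<open>\<nu>\<close> and \<open>G\<close>.\<close>
  have "continuous_on A (trap \<epsilon> \<sigma> I m)" for A \<epsilon> \<sigma> I m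
    unfolding trap_def by (rule continuous_on_trapezoid)
  then have "\<forall>\<epsilon> \<sigma> I m. \<exists>P. 0 < \<sigma> \<longrightarrow> (\<forall>y\<in>{Inf I..Sup I}. \<bar>trap \<epsilon> \<sigma> I m y - poly P y\<bar> < \<sigma>)"
    using Stone_Weierstrass_poly by blast
  then obtain Q where Q: "\<And>\<epsilon> \<sigma> I m. 0 < \<sigma> \<Longrightarrow>
      \<forall>y\<in>{Inf I..Sup I}. \<bar>trap \<epsilon> \<sigma> I m y - poly (Q \<epsilon> \<sigma> I m) y\<bar> < \<sigma>"
    by metis
  have "\<forall>\<epsilon> \<sigma> I. \<exists>D C. \<forall>m \<in> {-int (K \<sigma>)..\<lfloor>(Sup I - Inf I) / w \<epsilon> \<sigma>\<rfloor>}.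
      degree (Q \<epsilon> \<sigma> I m) \<le> D \<and> (\<forall>i. \<bar>coeff (Q \<epsilon> \<sigma> I m) i\<bar> \<le> C)"
    using finite_poly_family_bounded[OF finite_atLeastAtMost_int] by blast
  then obtain Cdeg Ccoef where bounds: "\<And>\<epsilon> \<sigma> I. \<forall>m \<in> {-int (K \<sigma>)..\<lfloor>(Sup I - Inf I) / w \<epsilon> \<sigma>\<rfloor>}.
      degree (Q \<epsilon> \<sigma> I m) \<le> Cdeg \<epsilon> \<sigma> I \<and> (\<forall>i. \<bar>coeff (Q \<epsilon> \<sigma> I m) i\<bar> \<le> Ccoef \<epsilon> \<sigma> I)"
    by metis
  show thesis
    apply (rule that[of Cdeg Ccoef])
    subgoal premises prems for \<epsilon> \<sigma> I \<Omega> \<nu> G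
    proof (rule shifted_cell_discretization[where w = "w \<epsilon> \<sigma>" and K = "K \<sigma>" and Q = "Q \<epsilon> \<sigma> I",
        OF prems(5-9) _ _ _ _ _ prems(3)])
      show K: "0 < K \<sigma>" "1 / K \<sigma> \<le> \<sigma>"
        unfolding K_def by (rule nat_ceiling_inverse_bounds[OF prems(2)])+
      show "0 < w \<epsilon> \<sigma>" "2 * w \<epsilon> \<sigma> * K \<sigma> = \<epsilon>"
        using K(1) prems(1) by (auto simp: w_def)
      show "I \<subseteq> {Inf I..Sup I}" using prems(4) by (rule bounded_subset_Icc_Inf_Sup)
      show "\<forall>m. \<forall>y\<in>{Inf I..Sup I}. \<bar>trapezoid (Inf I + w \<epsilon> \<sigma> * m) (Inf I + w \<epsilon> \<sigma> * (m + int (K \<sigma>)))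
          (w \<epsilon> \<sigma>) y - poly (Q \<epsilon> \<sigma> I m) y\<bar> < \<sigma>"
        using Q[OF prems(2)] unfolding trap_def by blast
      show "\<forall>m \<in> {-int (K \<sigma>)..\<lfloor>(Sup I - Inf I) / w \<epsilon> \<sigma>\<rfloor>}.
          degree (Q \<epsilon> \<sigma> I m) \<le> Cdeg \<epsilon> \<sigma> I \<and> (\<forall>i. \<bar>coeff (Q \<epsilon> \<sigma> I m) i\<bar> \<le> Ccoef \<epsilon> \<sigma> I)"
        by (rule bounds)
    qed
    done
qed

lemma hypergraph_system_space:
  assumes "hypergraph_system J Vj d H" "e \<in> H"
  shows "finite (VV Vj e)" "VV Vj e \<noteq> {}"
proof -
  have "e \<subseteq> J" "finite J" "\<forall>j\<in>J. finite (Vj j) \<and> Vj j \<noteq> {}"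
    using assms unfolding hypergraph_system_def by auto
  then have "\<forall>j\<in>e. finite (Vj j) \<and> Vj j \<noteq> {}" "finite e" by (auto intro: finite_subset)
  then show "finite (VV Vj e)" "VV Vj e \<noteq> {}"
    unfolding VV_def by (simp_all add: finite_PiE PiE_eq_empty_iff)
qed

lemma pseudorandom_system_avg_eventually_less:
  assumes "pseudorandom_system J V d H \<nu>" "1 < c"
  obtains N0 where "\<And>N e. N0 \<le> N \<Longrightarrow> e \<in> H \<Longrightarrow> avg (VV (V N) e) (\<nu> N e) < c"
proof -
  have "hypergraph_system J (V 0) d H"
    using assms(1) by (simp add: pseudorandom_system_def)
  then have "finite J" "H \<subseteq> Pow J" unfolding hypergraph_system_def by auto
  then have "finite H" by (meson finite_Pow_iff finite_subset)
  moreover have "\<forall>e\<in>H. \<forall>\<^sub>F N in sequentially. avg (VV (V N) e) (\<nu> N e) < c"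
  proof
    fix e assume "e \<in> H"
    then have "(\<lambda>N. avg (VV (V N) e) (\<nu> N e)) \<longlonglongrightarrow> 1"
      using assms(1) by (simp add: pseudorandom_system_def)
    then show "\<forall>\<^sub>F N in sequentially. avg (VV (V N) e) (\<nu> N e) < c"
      using assms(2) by (rule order_tendstoD(2))
  qed
  ultimately have "\<forall>\<^sub>F N in sequentially. \<forall>e\<in>H. avg (VV (V N) e) (\<nu> N e) < c"
    by (rule eventually_ball_finite)
  then show thesis using that unfolding eventually_sequentially by blast
qed

theorem mainTheorem14:
  fixes J :: "'j set" and V :: "nat \<Rightarrow> 'j \<Rightarrow> 'v set" and d :: nat and H :: "'j set set"
    and \<nu> :: "nat \<Rightarrow> 'j set \<Rightarrow> ('j \<Rightarrow> 'v) \<Rightarrow> real"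
  assumes "pseudorandom_system J V d H \<nu>"
  shows "\<exists>(Catoms :: real \<Rightarrow> real set \<Rightarrow> nat) (Cdeg :: real \<Rightarrow> real \<Rightarrow> real set \<Rightarrow> nat)
            (Ccoef :: real \<Rightarrow> real \<Rightarrow> real set \<Rightarrow> real) (CP :: real) (Cerr :: real)
            (N0 :: real \<Rightarrow> real \<Rightarrow> nat).
    \<forall>\<epsilon> \<sigma> :: real. 0 < \<epsilon> \<longrightarrow> \<epsilon> < 1 \<longrightarrow> 0 < \<sigma> \<longrightarrow> \<sigma> < 1/2 \<longrightarrow>
    (\<forall>N \<ge> N0 \<epsilon> \<sigma>. \<forall>e\<in>H. \<forall>I :: real set. is_interval I \<longrightarrow> bounded I \<longrightarrow> I \<noteq> {} \<longrightarrow>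
      (\<forall>G :: ('j \<Rightarrow> 'v) \<Rightarrow> real. (\<forall>x\<in>VV (V N) e. G x \<in> I) \<longrightarrow>
        (\<exists>B. sigma_algebra (VV (V N) e) B \<and>
          (\<forall>B'. sigma_algebra (VV (V N) e) B' \<longrightarrow>
             (\<forall>x\<in>VV (V N) e. \<bar>G x - cond_exp (join_sa (VV (V N) e) B B') G x\<bar> \<le> \<epsilon>)) \<and>
          card (atoms (VV (V N) e) B) \<le> Catoms \<epsilon> I \<and>
          (\<forall>A\<in>atoms (VV (V N) e) B. \<exists>P :: real poly.
             degree P \<le> Cdeg \<epsilon> \<sigma> I \<and>
             (\<forall>i. \<bar>coeff P i\<bar> \<le> Ccoef \<epsilon> \<sigma> I) \<and>
             (\<forall>y\<in>I. \<bar>poly P y\<bar> \<le> CP) \<and>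
             avg (VV (V N) e) (\<lambda>x. \<bar>indicator A x - poly P (G x)\<bar> * (\<nu> N e x + 1)) \<le> Cerr * \<sigma>))))"
proof -
  obtain N0 where N0: "\<And>N e. N0 \<le> N \<Longrightarrow> e \<in> H \<Longrightarrow> avg (VV (V N) e) (\<nu> N e) < 2"
    using pseudorandom_system_avg_eventually_less[OF assms, of 2] by auto
  have hs: "hypergraph_system J (V N) d H" for N
    using assms by (simp add: pseudorandom_system_def)
  have nonneg: "\<forall>x\<in>VV (V N) e. 0 \<le> \<nu> N e x" if "e \<in> H" for N e
    using assms that by (simp add: pseudorandom_system_def)
  show ?thesis
    apply (rule polynomial_discretization[where 'a = "'j \<Rightarrow> 'v"])
    subgoal premises disc for Cdeg Ccoef
      apply (rule exI[of _ "\<lambda>\<epsilon> I. nat (\<lfloor>2 * (Sup I - Inf I) / \<epsilon>\<rfloor> + 2)"], rule exI[of _ Cdeg],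
          rule exI[of _ Ccoef], rule exI[of _ 2], rule exI[of _ 12], rule exI[of _ "\<lambda>_ _. N0"])
      apply (intro allI impI ballI)
      subgoal premises prems for \<epsilon> \<sigma> N e I G
      proof -
        have "\<sigma> \<le> 1" using prems(4) by linarith
        from disc[OF prems(1,3) this prems(8) hypergraph_system_space[OF hs prems(6)]
            nonneg[OF prems(6)] N0[OF prems(5,6)] prems(10)]
        show ?thesis by blast
      qed
      done
    done
qed

end
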